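(* Let $P$ be a finite set of points in $\mathbb{R}^2$ in general position, and let $u,v$ be adjacent vertices of the convex hull of $P$. Then $|A(u)\cap A(v)|\le 1$.
   Context: Convex layers: $L^1$ is the set of vertices of the convex hull of $P$, $L^2$ the set of vertices of the convex hull of $P\setminus L^1$. A point $p$ is active for a hull point $u\in L^1$ if, upon deleting $u$ from $P$ and recomputing the first and second convex layers, $p$ moves to the first layer; $A(u)$ denotes the set of points active for $u$. *)

theory Defs
  imports "HOL-Analysis.Analysis"
begin

definition hull_vertices :: "(real^2) set \<Rightarrow> (real^2) set" where
  "hull_vertices P = {p \<in> P. p \<notin> convex hull (P - {p})}"

definition layer1 :: "(real^2) set \<Rightarrow> (real^2) set" where
  "layer1 P = hull_vertices P"

definition layer2 :: "(real^2) set \<Rightarrow> (real^2) set" where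
  "layer2 P = hull_vertices (P - layer1 P)"

definition active :: "(real^2) set \<Rightarrow> real^2 \<Rightarrow> (real^2) set" where
  "active P u = {p \<in> layer2 P. p \<in> layer1 (P - {u})}"

definition general_position :: "(real^2) set \<Rightarrow> bool" where
  "general_position P \<longleftrightarrow>
     (\<forall>a\<in>P. \<forall>b\<in>P. \<forall>c\<in>P. a \<noteq> b \<and> a \<noteq> c \<and> b \<noteq> c \<longrightarrow> \<not> collinear {a, b, c})"

definition adjacent_hull_vertices :: "(real^2) set \<Rightarrow> real^2 \<Rightarrow> real^2 \<Rightarrow> bool" where
  "adjacent_hull_vertices P u v \<longleftrightarrow>
     u \<in> layer1 P \<and> v \<in> layer1 P \<and> u \<noteq> v \<and> closed_segment u v face_of convex hull P"

end

(*
  A point p active for both u and v lies in conv (P - {p}) but neither in conv (P - {u, p})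
  nor in conv (P - {v, p}). Given two such points p and q, each one lies in the hull of the
  points other than p and q, so by Caratheodory p lies in a triangle u v w and q in a
  triangle u v w', with w, w' in P - {p, q}. No such triangle contains both points: splitting
  it at one of them would put each of p, q into the triangle spanned by u, v and the other,
  forcing p = q or p on the edge uv. Radon's theorem for u, v, w, w' now leaves only
  impossible configurations: a hull vertex inside a triangle of other points, nested
  triangles, a segment between points of P crossing the hull edge uv, or crossing segments
  u w and v w' (or u w' and v w). In the last case the crossing point z splits the triangle
  u v w into z v w, which lies in the triangle w' v w avoiding u, the segment u w, and
  u v z, which lies in the triangle u v w'; none of them can contain p.
*)

theory Submission
  imports Defs
begin

lemma convex_hull_insert_swap:
  fixes p q :: "'a::real_vector"
  assumes p: "p \<in> convex hull (insert q S)" and q: "q \<in> convex hull (insert p S)"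
  shows "p = q \<or> p \<in> convex hull S"
proof (cases "S = {}")
  case True
  then show ?thesis using p by simp
next
  case False
  obtain s s' b where "0 \<le> s" "0 \<le> s'" "s + s' = 1" "b \<in> convex hull S"
      "p = s *\<^sub>R q + s' *\<^sub>R b"
    using p unfolding convex_hull_insert[OF False] by blast
  then have s: "0 \<le> s" "s \<le> 1" "b \<in> convex hull S" "p = s *\<^sub>R q + (1 - s) *\<^sub>R b"
    by auto
  obtain t t' c where "0 \<le> t" "0 \<le> t'" "t + t' = 1" "c \<in> convex hull S"
      "q = t *\<^sub>R p + t' *\<^sub>R c"
    using q unfolding convex_hull_insert[OF False] by blast
  then have t: "0 \<le> t" "t \<le> 1" "c \<in> convex hull S" "q = t *\<^sub>R p + (1 - t) *\<^sub>R c"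
    by auto
  show ?thesis
  proof (cases "s * t = 1")
    case True
    moreover have "s * t \<le> s" "s * t \<le> t"
      using s t by (simp_all add: mult_left_le mult_left_le_one_le)
    ultimately have "s = 1" "t = 1" using s t by linarith+
    then show ?thesis using s by simp
  next
    case False
    define k where "k = 1 - s * t"
    have "s * t \<le> 1" using s t by (simp add: mult_le_one)
    with False have k: "k > 0" unfolding k_def by linarith
    have "k *\<^sub>R p = (s * (1 - t)) *\<^sub>R c + (1 - s) *\<^sub>R b"
      using s(4)[unfolded t(4)] unfolding k_def by (simp add: algebra_simps)
    then have "inverse k *\<^sub>R (k *\<^sub>R p) = (s * (1 - t) / k) *\<^sub>R c + ((1 - s) / k) *\<^sub>R b"
      by (simp add: scaleR_add_right divide_inverse_commute)
    then have "p = (s * (1 - t) / k) *\<^sub>R c + ((1 - s) / k) *\<^sub>R b"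
      using k by simp
    moreover have "s * (1 - t) / k + (1 - s) / k = 1"
      using k unfolding k_def by (simp add: field_simps)
    moreover have "(s * (1 - t) / k) *\<^sub>R c + ((1 - s) / k) *\<^sub>R b \<in> convex hull S"
      by (rule convexD[OF convex_convex_hull t(3) s(3)]) (use s t k calculation in auto)
    ultimately have "p \<in> convex hull S"
      by simp
    then show ?thesis ..
  qed
qed

lemma in_triangle_exchange:
  fixes a b c z x :: "'a::euclidean_space"
  assumes "z \<in> convex hull {a, b, c}" "x \<in> convex hull {a, b, c}"
  shows "x \<in> convex hull {z, b, c} \<or> x \<in> convex hull {a, z, c} \<or> x \<in> convex hull {a, b, z}"
proof -
  obtain y where y: "y \<in> {a, b, c}" and x: "x \<in> convex hull (insert z ({a, b, c} - {y}))"
    using in_convex_hull_exchange[OF assms] by blast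
  from y consider "y = a" | "y = b" | "y = c" by blast
  then show ?thesis
  proof cases
    case 1
    then have sub: "insert z ({a, b, c} - {y}) \<subseteq> {z, b, c}" by blast
    then show ?thesis using x hull_mono[OF sub] by blast
  next
    case 2
    then have sub: "insert z ({a, b, c} - {y}) \<subseteq> {a, z, c}" by blast
    then show ?thesis using x hull_mono[OF sub] by blast
  next
    case 3
    then have sub: "insert z ({a, b, c} - {y}) \<subseteq> {a, b, z}" by blast
    then show ?thesis using x hull_mono[OF sub] by blast
  qed
qed

lemma Radon_four_points:
  fixes a b c d :: "'a::real_vector"
  assumes "affine_dependent {a, b, c, d}"
  shows "a \<in> convex hull {b, c, d} \<or> b \<in> convex hull {a, c, d} \<or>
    c \<in> convex hull {a, b, d} \<or> d \<in> convex hull {a, b, c} \<or>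
    closed_segment a b \<inter> closed_segment c d \<noteq> {} \<or>
    closed_segment a c \<inter> closed_segment b d \<noteq> {} \<or>
    closed_segment a d \<inter> closed_segment b c \<noteq> {}"
proof -
  obtain M N where MN: "M \<inter> N = {}" "M \<union> N = {a, b, c, d}"
    and meet: "convex hull M \<inter> convex hull N \<noteq> {}"
    using Radon_partition[OF _ assms] by blast
  have "M = {a, b, c, d} \<inter> M" "N = {a, b, c, d} - M"
    using MN by blast+
  with meet have "convex hull ({a, b, c, d} \<inter> M) \<inter> convex hull ({a, b, c, d} - M) \<noteq> {}"
    by simp
  then show ?thesis
    by (cases "a \<in> M"; cases "b \<in> M"; cases "c \<in> M"; cases "d \<in> M")
      (auto simp: segment_convex_hull insert_commute Int_insert_left insert_Diff_if)
qed

lemma face_of_Int_closed_segment: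
  assumes "F face_of S" "a \<in> S" "b \<in> S" "a \<notin> F" "b \<notin> F"
  shows "F \<inter> closed_segment a b = {}"
proof -
  have "z \<notin> F" if "z \<in> closed_segment a b" for z
  proof
    assume "z \<in> F"
    with assms(4,5) have "z \<in> open_segment a b"
      using that unfolding open_segment_def by auto
    with face_ofD[OF assms(1) _ assms(2,3) \<open>z \<in> F\<close>] assms(4) show False by blast
  qed
  then show ?thesis by blast
qed

lemma general_position_not_in_segment:
  assumes "general_position P" "x \<in> P" "a \<in> P" "b \<in> P" "x \<noteq> a" "x \<noteq> b"
  shows "x \<notin> closed_segment a b"
proof
  assume x: "x \<in> closed_segment a b"
  show False
  proof (cases "a = b")
    case True
    with x assms(5) show False by simp
  next
    case False
    from x have "collinear {a, x, b}"
      by (intro between_imp_collinear) (simp add: between_mem_segment)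
    moreover have "\<not> collinear {a, x, b}"
      using assms(1)[unfolded general_position_def, rule_format, of a x b] assms(2-6) False by auto
    ultimately show False by blast
  qed
qed

lemma activeD:
  assumes "p \<in> active P u"
  shows "p \<in> P" "p \<noteq> u" "p \<in> convex hull (P - {p})"
  using assms unfolding active_def layer2_def layer1_def hull_vertices_def by auto

lemma doubly_activeD:
  assumes "p \<in> active P u \<inter> active P v"
  shows "p \<in> P" "p \<noteq> u" "p \<noteq> v"
  using activeD[of p P u] activeD[of p P v] assms by auto

lemma active_not_in_hull:
  assumes "p \<in> active P u" "S \<subseteq> P - {u, p}"
  shows "p \<notin> convex hull S"
proof
  assume "p \<in> convex hull S"
  moreover have "convex hull S \<subseteq> convex hull (P - {u} - {p})"
    using assms(2) by (intro hull_mono) auto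
  ultimately show False
    using assms(1) unfolding active_def layer1_def hull_vertices_def by auto
qed

lemma active_pair_in_hull:
  assumes p: "p \<in> active P u" and q: "q \<in> active P u" and "p \<noteq> q"
  shows "p \<in> convex hull (P - {p, q})"
proof -
  have "insert q (P - {p, q}) = P - {p}" "insert p (P - {p, q}) = P - {q}"
    using activeD(1)[OF p] activeD(1)[OF q] \<open>p \<noteq> q\<close> by auto
  with activeD(3)[OF p] activeD(3)[OF q] \<open>p \<noteq> q\<close> show ?thesis
    using convex_hull_insert_swap by metis
qed

locale hull_edge =
  fixes P :: "(real^2) set" and u v :: "real^2"
  assumes general_position: "general_position P"
    and adjacent: "adjacent_hull_vertices P u v"
begin

lemma hull_edge_commute: "hull_edge P v u"
  using general_position adjacent
  by unfold_locales (auto simp: adjacent_hull_vertices_def closed_segment_commute)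

lemma vertices: "u \<in> P" "v \<in> P" "u \<noteq> v"
  using adjacent unfolding adjacent_hull_vertices_def layer1_def hull_vertices_def by auto

lemma vertex_not_in_hull:
  "S \<subseteq> P - {u} \<Longrightarrow> u \<notin> convex hull S" "S \<subseteq> P - {v} \<Longrightarrow> v \<notin> convex hull S"
  using adjacent hull_mono[of S "P - {u}" convex] hull_mono[of S "P - {v}" convex]
  unfolding adjacent_hull_vertices_def layer1_def hull_vertices_def by auto

lemma not_in_segment:
  "x \<in> P \<Longrightarrow> a \<in> P \<Longrightarrow> b \<in> P \<Longrightarrow> x \<noteq> a \<Longrightarrow> x \<noteq> b \<Longrightarrow> x \<notin> closed_segment a b"
  using general_position_not_in_segment[OF general_position] by blast

lemma edge_Int_segment:
  assumes "w \<in> P" "w' \<in> P" "w \<notin> {u, v}" "w' \<notin> {u, v}"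
  shows "closed_segment u v \<inter> closed_segment w w' = {}"
proof (rule face_of_Int_closed_segment)
  show "closed_segment u v face_of convex hull P"
    using adjacent unfolding adjacent_hull_vertices_def by blast
  show "w \<in> convex hull P" "w' \<in> convex hull P"
    using assms by (auto intro: hull_inc)
  show "w \<notin> closed_segment u v"
    using assms vertices by (intro not_in_segment) auto
  show "w' \<notin> closed_segment u v"
    using assms vertices by (intro not_in_segment) auto
qed

lemma doubly_active_in_triangle:
  assumes p: "p \<in> active P u \<inter> active P v" and X: "X \<subseteq> P - {p}" "p \<in> convex hull X"
  obtains w where "w \<in> X" "w \<noteq> u" "w \<noteq> v" "p \<in> convex hull {u, v, w}"
proof -
  obtain T where T: "finite T" "T \<subseteq> X" "card T \<le> 3" "p \<in> convex hull T"
    using X(2) caratheodory[of X] by auto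
  have pu: "p \<in> active P u" and pv: "p \<in> active P v" using p by auto
  have "u \<in> T" using active_not_in_hull[OF pu, of T] T X(1) by blast
  moreover have "v \<in> T" using active_not_in_hull[OF pv, of T] T X(1) by blast
  moreover have "T \<noteq> {u, v}"
  proof
    assume "T = {u, v}"
    with T(4) have "p \<in> closed_segment u v" by (simp add: segment_convex_hull)
    moreover have "p \<notin> closed_segment u v"
      using doubly_activeD[OF p] vertices by (intro not_in_segment) auto
    ultimately show False by blast
  qed
  ultimately obtain w where w: "w \<in> T" "w \<noteq> u" "w \<noteq> v" by blast
  have "{u, v, w} \<subseteq> T" using \<open>u \<in> T\<close> \<open>v \<in> T\<close> w(1) by blast
  moreover have "card {u, v, w} = 3" using w(2,3) vertices(3) by simp
  ultimately have "{u, v, w} = T" using card_seteq[OF T(1)] T(3) by simp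
  with that w T show ?thesis by blast
qed

lemma doubly_active_in_subtriangle:
  assumes p: "p \<in> active P u \<inter> active P v" and q: "q \<in> active P u \<inter> active P v" and "p \<noteq> q"
    and w: "w \<in> P" "w \<notin> {p, u, v}"
    and pw: "p \<in> convex hull {u, v, w}" and qw: "q \<in> convex hull {u, v, w}"
  shows "p \<in> convex hull {u, v, q}"
proof -
  have "{q, v, w} \<subseteq> P - {u, p}" "{u, q, w} \<subseteq> P - {v, p}"
    using doubly_activeD[OF p] doubly_activeD[OF q] w vertices \<open>p \<noteq> q\<close> by auto
  then have "p \<notin> convex hull {q, v, w}" "p \<notin> convex hull {u, q, w}"
    using active_not_in_hull p by auto
  with in_triangle_exchange[OF qw pw] show ?thesis by blast
qed

lemma doubly_active_not_in_same_triangle: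
  assumes p: "p \<in> active P u \<inter> active P v" and q: "q \<in> active P u \<inter> active P v" and "p \<noteq> q"
    and w: "w \<in> P" "w \<notin> {p, q, u, v}" and pw: "p \<in> convex hull {u, v, w}"
  shows "q \<notin> convex hull {u, v, w}"
proof
  assume qw: "q \<in> convex hull {u, v, w}"
  have "p \<in> convex hull {u, v, q}"
    using doubly_active_in_subtriangle[OF p q \<open>p \<noteq> q\<close> w(1) _ pw qw] w(2) by simp
  moreover have "q \<in> convex hull {u, v, p}"
    using doubly_active_in_subtriangle[OF q p \<open>p \<noteq> q\<close>[symmetric] w(1) _ qw pw] w(2) by simp
  moreover have "{u, v, q} = insert q {u, v}" "{u, v, p} = insert p {u, v}" by auto
  ultimately have "p \<in> convex hull {u, v}"
    using convex_hull_insert_swap \<open>p \<noteq> q\<close> by metis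
  moreover have "p \<notin> closed_segment u v"
    using doubly_activeD[OF p] vertices by (intro not_in_segment) auto
  ultimately show False by (simp add: segment_convex_hull)
qed

lemma doubly_active_segments_disjoint:
  assumes p: "p \<in> active P u \<inter> active P v"
    and w: "w \<in> P" "w \<notin> {p, u, v}" and w': "w' \<in> P" "w' \<notin> {p, u, v}"
    and pw: "p \<in> convex hull {u, v, w}" and pw': "p \<notin> convex hull {u, v, w'}"
  shows "closed_segment u w \<inter> closed_segment v w' = {}"
proof (rule ccontr)
  assume "closed_segment u w \<inter> closed_segment v w' \<noteq> {}"
  then obtain z where zw: "z \<in> closed_segment u w" and zw': "z \<in> closed_segment v w'" by blast
  have "closed_segment u w \<subseteq> convex hull {u, v, w}"
    "closed_segment v w' \<subseteq> convex hull {w', v, w}" "closed_segment v w' \<subseteq> convex hull {u, v, w'}"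
    by (intro closed_segment_subset_convex_hull; simp add: hull_inc)+
  with zw zw' have z: "z \<in> convex hull {u, v, w}" "z \<in> convex hull {w', v, w}" "z \<in> convex hull {u, v, w'}"
    by auto
  from in_triangle_exchange[OF z(1) pw] show False
  proof (elim disjE)
    assume "p \<in> convex hull {z, v, w}"
    moreover have "convex hull {z, v, w} \<subseteq> convex hull {w', v, w}"
      using z(2) by (intro convex_hull_subset) (auto intro: hull_inc)
    moreover have "{w', v, w} \<subseteq> P - {u, p}"
      using w w' vertices doubly_activeD[OF p] by auto
    ultimately show False using active_not_in_hull p by blast
  next
    assume "p \<in> convex hull {u, z, w}"
    moreover have "convex hull {u, z, w} \<subseteq> closed_segment u w"
      using zw unfolding segment_convex_hull by (intro convex_hull_subset) (auto intro: hull_inc)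
    moreover have "p \<notin> closed_segment u w"
      using doubly_activeD[OF p] w vertices by (intro not_in_segment) auto
    ultimately show False by blast
  next
    assume "p \<in> convex hull {u, v, z}"
    moreover have "convex hull {u, v, z} \<subseteq> convex hull {u, v, w'}"
      using z(3) by (intro convex_hull_subset) (auto intro: hull_inc)
    ultimately show False using pw' by blast
  qed
qed

lemma doubly_active_pair_triangles:
  assumes p: "p \<in> active P u \<inter> active P v" and q: "q \<in> active P u \<inter> active P v" and "p \<noteq> q"
  obtains w w' where "w \<in> P" "w \<notin> {p, q, u, v}" "w' \<in> P" "w' \<notin> {p, q, u, v}"
    "p \<in> convex hull {u, v, w}" "q \<notin> convex hull {u, v, w}"
    "q \<in> convex hull {u, v, w'}" "p \<notin> convex hull {u, v, w'}"
proof -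
  have pu: "p \<in> active P u" and qu: "q \<in> active P u" using p q by auto
  obtain w where w: "w \<in> P - {p, q}" "w \<noteq> u" "w \<noteq> v" "p \<in> convex hull {u, v, w}"
    using doubly_active_in_triangle[OF p _ active_pair_in_hull[OF pu qu \<open>p \<noteq> q\<close>]] by blast
  obtain w' where w': "w' \<in> P - {q, p}" "w' \<noteq> u" "w' \<noteq> v" "q \<in> convex hull {u, v, w'}"
    using doubly_active_in_triangle[OF q _ active_pair_in_hull[OF qu pu \<open>p \<noteq> q\<close>[symmetric]]] by blast
  have "q \<notin> convex hull {u, v, w}"
    using doubly_active_not_in_same_triangle[OF p q \<open>p \<noteq> q\<close> _ _ w(4)] w by auto
  moreover have "p \<notin> convex hull {u, v, w'}"
    using doubly_active_not_in_same_triangle[OF q p \<open>p \<noteq> q\<close>[symmetric] _ _ w'(4)] w' by auto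
  ultimately show ?thesis using that w w' by auto
qed

lemma doubly_active_unique:
  assumes p: "p \<in> active P u \<inter> active P v" and q: "q \<in> active P u \<inter> active P v"
  shows "p = q"
proof (rule ccontr)
  assume "p \<noteq> q"
  then obtain w w' where w: "w \<in> P" "w \<notin> {p, q, u, v}" and w': "w' \<in> P" "w' \<notin> {p, q, u, v}"
    and pw: "p \<in> convex hull {u, v, w}" and qw: "q \<notin> convex hull {u, v, w}"
    and qw': "q \<in> convex hull {u, v, w'}" and pw': "p \<notin> convex hull {u, v, w'}"
    using doubly_active_pair_triangles[OF p q] by blast
  have "w \<noteq> w'" using pw pw' by blast
  then have "affine_dependent {u, v, w, w'}"
    using w w' vertices(3) by (intro affine_dependent_biggerset) auto
  from Radon_four_points[OF this] show False
  proof (elim disjE)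
    assume "u \<in> convex hull {v, w, w'}"
    with vertex_not_in_hull(1)[of "{v, w, w'}"] vertices w w' show False by auto
  next
    assume "v \<in> convex hull {u, w, w'}"
    with vertex_not_in_hull(2)[of "{u, w, w'}"] vertices w w' show False by auto
  next
    assume "w \<in> convex hull {u, v, w'}"
    then have "convex hull {u, v, w} \<subseteq> convex hull {u, v, w'}"
      by (intro convex_hull_subset) (auto intro: hull_inc)
    with pw pw' show False by blast
  next
    assume "w' \<in> convex hull {u, v, w}"
    then have "convex hull {u, v, w'} \<subseteq> convex hull {u, v, w}"
      by (intro convex_hull_subset) (auto intro: hull_inc)
    with qw qw' show False by blast
  next
    assume "closed_segment u v \<inter> closed_segment w w' \<noteq> {}"
    with edge_Int_segment[OF w(1) w'(1)] w(2) w'(2) show False by auto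
  next
    assume "closed_segment u w \<inter> closed_segment v w' \<noteq> {}"
    with doubly_active_segments_disjoint[OF p w(1) _ w'(1) _ pw pw'] w w' show False by auto
  next
    assume "closed_segment u w' \<inter> closed_segment v w \<noteq> {}"
    moreover have "closed_segment v w \<inter> closed_segment u w' = {}"
      using hull_edge.doubly_active_segments_disjoint[OF hull_edge_commute, of p w w'] p w w' pw pw'
      by (auto simp: insert_commute)
    ultimately show False by blast
  qed
qed

end

theorem lemma1:
  fixes P :: "(real^2) set" and u v :: "real^2"
  assumes "finite P"
    and "general_position P"
    and "adjacent_hull_vertices P u v"
  shows "card (active P u \<inter> active P v) \<le> 1"
proof -
  interpret hull_edge P u v
    using assms(2,3) by unfold_locales
  have "finite (active P u \<inter> active P v)"
    using assms(1) by (rule finite_subset[rotated]) (auto dest: activeD)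
  then show ?thesis
    using doubly_active_unique by (auto simp: card_le_Suc0_iff_eq)
qed

end
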